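(* Let $\mathcal{T}\subset\mathbb{R}$ be a compact interval of positive length, let $y_1,\dots,y_n$ and $g$ be continuous real functions on $\mathcal{T}$, and let $\alpha\in[1/(l+1),1)$. Define $k$, $\mathcal{H}_2$ and $M$ as in the context, and assume $M(t)>0$ for all $t\in\mathcal{T}$. Set $$\bar s^c(t):=\frac{M(t)}{\int_{\mathcal{T}}M(u)\,du}.$$ Then $$k^{\bar s^c}=\int_{\mathcal{T}}M(t)\,dt.$$
   Context: $\{1,\dots,n\}$ is partitioned into $\mathcal{I}_1$ with $|\mathcal{I}_1|=m\ge1$ and $\mathcal{I}_2$ with $|\mathcal{I}_2|=l\ge1$. Put $r:=\lceil (l+1)(1-\alpha)\rceil$. Let $k$ be the $r$-th smallest value of the multiset $\{\sup_{t\in\mathcal{T}}|y_h(t)-g(t)|:h\in\mathcal{I}_2\}$. Define $$\mathcal{H}_2:=\{j\in\mathcal{I}_2:\sup_{t\in\mathcal{T}}|y_j(t)-g(t)|\le k\},\qquad M(t):=\max_{j\in\mathcal{H}_2}|y_j(t)-g(t)|.$$ For any bounded function $u:\mathcal{T}\to(0,\infty)$, define the scores $R^u_h:=\sup_{t\in\mathcal{T}}|y_h(t)-g(t)|/u(t)$ for $h\in\mathcal{I}_2$, and let $k^u$ be the $r$-th smallest value of the multiset $\{R^u_h:h\in\mathcal{I}_2\}$. *)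

theory Defs
  imports "HOL-Analysis.Analysis" "HOL-Library.Multiset"
begin

definition rth_smallest :: "nat \<Rightarrow> real multiset \<Rightarrow> real" where
  "rth_smallest r A = sorted_list_of_multiset A ! (r - 1)"

definition conf_rank :: "real \<Rightarrow> nat \<Rightarrow> nat" where
  "conf_rank \<alpha> l = nat \<lceil>(real l + 1) * (1 - \<alpha>)\<rceil>"

definition kq :: "real set \<Rightarrow> (nat \<Rightarrow> real \<Rightarrow> real) \<Rightarrow> (real \<Rightarrow> real) \<Rightarrow> nat set \<Rightarrow> real \<Rightarrow> real" where
  "kq T y g I2 \<alpha> = rth_smallest (conf_rank \<alpha> (card I2))
      (image_mset (\<lambda>h. SUP t\<in>T. \<bar>y h t - g t\<bar>) (mset_set I2))"

definition H2set :: "real set \<Rightarrow> (nat \<Rightarrow> real \<Rightarrow> real) \<Rightarrow> (real \<Rightarrow> real) \<Rightarrow> nat set \<Rightarrow> real \<Rightarrow> nat set" where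
  "H2set T y g I2 \<alpha> = {j \<in> I2. (SUP t\<in>T. \<bar>y j t - g t\<bar>) \<le> kq T y g I2 \<alpha>}"

definition Mfun :: "real set \<Rightarrow> (nat \<Rightarrow> real \<Rightarrow> real) \<Rightarrow> (real \<Rightarrow> real) \<Rightarrow> nat set \<Rightarrow> real \<Rightarrow> real \<Rightarrow> real" where
  "Mfun T y g I2 \<alpha> t = Max ((\<lambda>j. \<bar>y j t - g t\<bar>) ` H2set T y g I2 \<alpha>)"

definition ku :: "real set \<Rightarrow> (nat \<Rightarrow> real \<Rightarrow> real) \<Rightarrow> (real \<Rightarrow> real) \<Rightarrow> nat set \<Rightarrow> real \<Rightarrow> (real \<Rightarrow> real) \<Rightarrow> real" where
  "ku T y g I2 \<alpha> u = rth_smallest (conf_rank \<alpha> (card I2))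
      (image_mset (\<lambda>h. SUP t\<in>T. \<bar>y h t - g t\<bar> / u t) (mset_set I2))"

end

theory Submission imports Defs begin

text \<open>Write \<open>S\<^sub>h\<close> for the sup-deviation of \<open>y\<^sub>h\<close>, so that \<open>k\<close> is the \<open>r\<close>-th smallest \<open>S\<^sub>h\<close>
  and \<open>M\<close> is the pointwise maximum over \<open>\<H>\<^sub>2 = {h. S\<^sub>h \<le> k}\<close>. For any constant \<open>c > 0\<close> and
  \<open>u = M / c\<close>, the score \<open>R\<^sup>u\<^sub>h\<close> is at most \<open>c\<close> when \<open>S\<^sub>h \<le> k\<close>, since then \<open>|y\<^sub>h - g| \<le> M\<close>.
  When \<open>S\<^sub>h \<ge> k\<close>, the deviation attains its sup at some \<open>t\<^sub>0\<close>, where it is \<open>\<ge> k \<ge> M(t\<^sub>0)\<close>,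
  so \<open>R\<^sup>u\<^sub>h \<ge> c\<close>. Hence the scores \<open>R\<^sup>u\<^sub>h\<close> sit on the same side of \<open>c\<close> as the \<open>S\<^sub>h\<close> of \<open>k\<close>,
  and the \<open>r\<close>-th smallest score is \<open>c\<close>. The theorem is the case \<open>c = \<integral>M\<close>.\<close>

lemma size_filter_mset_eq_card_sorted:
  "size (filter_mset P A) =
     card {i. i < length (sorted_list_of_multiset A) \<and> P (sorted_list_of_multiset A ! i)}"
proof -
  have "size (filter_mset P A) = size (filter_mset P (mset (sorted_list_of_multiset A)))"
    by simp
  also have "\<dots> = length (filter P (sorted_list_of_multiset A))"
    by (metis mset_filter size_mset)
  finally show ?thesis
    by (simp add: length_filter_conv_card)
qed

lemma
  fixes A :: "real multiset"
  assumes "1 \<le> r" "r \<le> size A"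
  shows size_filter_less_rth_smallest: "size (filter_mset (\<lambda>x. x < rth_smallest r A) A) < r"
    and size_filter_le_rth_smallest: "r \<le> size (filter_mset (\<lambda>x. x \<le> rth_smallest r A) A)"
proof -
  define xs where "xs = sorted_list_of_multiset A"
  have len: "length xs = size A"
    unfolding xs_def by (metis mset_sorted_list_of_multiset size_mset)
  have sorted: "sorted xs"
    unfolding xs_def by simp
  have v: "rth_smallest r A = xs ! (r - 1)"
    unfolding xs_def rth_smallest_def by simp
  have "{i. i < length xs \<and> xs ! i < xs ! (r - 1)} \<subseteq> {..<r - 1}"
    using sorted by (auto simp: sorted_iff_nth_mono not_less[symmetric])
  hence "card {i. i < length xs \<and> xs ! i < xs ! (r - 1)} \<le> r - 1"
    by (metis card_lessThan card_mono finite_lessThan)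
  thus "size (filter_mset (\<lambda>x. x < rth_smallest r A) A) < r"
    using assms size_filter_mset_eq_card_sorted[of _ A] unfolding v xs_def by simp
  have "{..<r} \<subseteq> {i. i < length xs \<and> xs ! i \<le> xs ! (r - 1)}"
    using sorted len assms by (auto simp: sorted_iff_nth_mono)
  hence "r \<le> card {i. i < length xs \<and> xs ! i \<le> xs ! (r - 1)}"
    by (metis card_lessThan card_mono finite_Collect_conjI finite_Collect_less_nat)
  thus "r \<le> size (filter_mset (\<lambda>x. x \<le> rth_smallest r A) A)"
    using size_filter_mset_eq_card_sorted[of _ A] unfolding v xs_def by simp
qed

lemma rth_smallest_eqI:
  fixes A :: "real multiset"
  assumes "1 \<le> r" "r \<le> size A"
    and "size (filter_mset (\<lambda>x. x < v) A) < r" "r \<le> size (filter_mset (\<lambda>x. x \<le> v) A)"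
  shows "rth_smallest r A = v"
proof (rule ccontr)
  assume ne: "rth_smallest r A \<noteq> v"
  note counts = size_filter_less_rth_smallest[OF assms(1,2)] size_filter_le_rth_smallest[OF assms(1,2)]
  show False
  proof (cases "rth_smallest r A < v")
    case True
    hence "size (filter_mset (\<lambda>x. x \<le> rth_smallest r A) A) \<le> size (filter_mset (\<lambda>x. x < v) A)"
      by (intro size_mset_mono filter_mset_mono_strong) auto
    thus False using counts assms by linarith
  next
    case False
    hence "v < rth_smallest r A" using ne by linarith
    hence "size (filter_mset (\<lambda>x. x \<le> v) A) \<le> size (filter_mset (\<lambda>x. x < rth_smallest r A) A)"
      by (intro size_mset_mono filter_mset_mono_strong) auto
    thus False using counts assms by linarith
  qed
qed

lemma size_filter_image_mset_mset_set:
  "finite I \<Longrightarrow> size (filter_mset P (image_mset f (mset_set I))) = card {h \<in> I. P (f h)}"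
  by (simp add: filter_mset_image_mset)

lemma r_le_card_sublevel_rth_smallest:
  fixes S :: "'i \<Rightarrow> real"
  assumes "finite I" "1 \<le> r" "r \<le> card I"
  shows "r \<le> card {h \<in> I. S h \<le> rth_smallest r (image_mset S (mset_set I))}"
  using size_filter_le_rth_smallest[of r "image_mset S (mset_set I)"] assms
  by (simp add: size_filter_image_mset_mset_set)

lemma sublevel_rth_smallest_nonempty:
  fixes S :: "'i \<Rightarrow> real"
  assumes "finite I" "1 \<le> r" "r \<le> card I"
  shows "{h \<in> I. S h \<le> rth_smallest r (image_mset S (mset_set I))} \<noteq> {}"
  using r_le_card_sublevel_rth_smallest[OF assms, of S] assms(2) by (metis card.empty not_one_le_zero order_trans)

lemma rth_smallest_image_mset_transfer:
  fixes S R :: "'i \<Rightarrow> real"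
  assumes "finite I" "1 \<le> r" "r \<le> card I"
    and k: "k = rth_smallest r (image_mset S (mset_set I))"
    and below: "\<And>h. h \<in> I \<Longrightarrow> S h \<le> k \<Longrightarrow> R h \<le> v"
    and above: "\<And>h. h \<in> I \<Longrightarrow> k \<le> S h \<Longrightarrow> v \<le> R h"
  shows "rth_smallest r (image_mset R (mset_set I)) = v"
proof (rule rth_smallest_eqI)
  have size_S: "size (image_mset S (mset_set I)) = card I"
    by simp
  have "card {h \<in> I. R h < v} \<le> card {h \<in> I. S h < k}"
    using assms(1) above by (intro card_mono) (auto simp: not_less[symmetric])
  also have "\<dots> < r"
    using size_filter_less_rth_smallest[of r "image_mset S (mset_set I)"] assms
    by (simp add: size_filter_image_mset_mset_set)
  finally show "size (filter_mset (\<lambda>x. x < v) (image_mset R (mset_set I))) < r"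
    using assms(1) by (simp add: size_filter_image_mset_mset_set)
  have "r \<le> card {h \<in> I. S h \<le> k}"
    using r_le_card_sublevel_rth_smallest assms(1-4) by simp
  also have "\<dots> \<le> card {h \<in> I. R h \<le> v}"
    using assms(1) below by (intro card_mono) auto
  finally show "r \<le> size (filter_mset (\<lambda>x. x \<le> v) (image_mset R (mset_set I)))"
    using assms(1) by (simp add: size_filter_image_mset_mset_set)
qed (use assms in simp_all)

lemma conf_rank_bounds:
  assumes "1 / (real l + 1) \<le> \<alpha>" "\<alpha> < 1"
  shows "1 \<le> conf_rank \<alpha> l" "conf_rank \<alpha> l \<le> l"
proof -
  have "0 < (real l + 1) * (1 - \<alpha>)"
    using assms(2) by simp
  thus "1 \<le> conf_rank \<alpha> l"
    unfolding conf_rank_def by linarith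
  have "1 \<le> (real l + 1) * \<alpha>"
    using assms(1) by (simp add: divide_le_eq mult.commute)
  hence "(real l + 1) * (1 - \<alpha>) \<le> real l"
    by (simp add: algebra_simps)
  hence "\<lceil>(real l + 1) * (1 - \<alpha>)\<rceil> \<le> int l"
    by (simp add: ceiling_le_iff)
  thus "conf_rank \<alpha> l \<le> l"
    unfolding conf_rank_def by linarith
qed

lemma continuous_on_Max_image:
  fixes f :: "'i \<Rightarrow> 'a::topological_space \<Rightarrow> real"
  assumes "finite H" "H \<noteq> {}" "\<And>j. j \<in> H \<Longrightarrow> continuous_on T (f j)"
  shows "continuous_on T (\<lambda>t. Max ((\<lambda>j. f j t) ` H))"
  using assms
proof (induction H rule: finite_ne_induct)
  case (insert x F)
  have "(\<lambda>t. Max ((\<lambda>j. f j t) ` insert x F)) = (\<lambda>t. max (f x t) (Max ((\<lambda>j. f j t) ` F)))"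
    using insert.hyps by simp
  thus ?case
    using insert by (simp add: continuous_on_max)
qed simp

lemma integral_pos_continuous:
  fixes f :: "real \<Rightarrow> real"
  assumes "a < b" "continuous_on {a..b} f" "\<And>t. t \<in> {a..b} \<Longrightarrow> 0 < f t"
  shows "0 < integral {a..b} f"
proof -
  obtain t1 where t1: "t1 \<in> {a..b}" "\<And>t. t \<in> {a..b} \<Longrightarrow> f t1 \<le> f t"
    using continuous_attains_inf[OF compact_Icc _ assms(2)] assms(1) by auto
  have "0 < (b - a) * f t1"
    using assms(1,3) t1(1) by simp
  also have "\<dots> = integral {a..b} (\<lambda>t. f t1)"
    using assms(1) by simp
  also have "\<dots> \<le> integral {a..b} f"
    using assms(2) t1 by (intro integral_le integrable_continuous_interval) auto
  finally show ?thesis .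
qed

lemma bdd_above_continuous_image:
  fixes f :: "'a::topological_space \<Rightarrow> real"
  assumes "compact T" "continuous_on T f"
  shows "bdd_above (f ` T)"
  using compact_continuous_image[OF assms(2,1)] by (meson bounded_imp_bdd_above compact_imp_bounded)

lemma SUP_divide_rescaled_le:
  fixes F M :: "'a \<Rightarrow> real"
  assumes "T \<noteq> {}" "0 < c" "\<And>t. t \<in> T \<Longrightarrow> 0 < M t" "\<And>t. t \<in> T \<Longrightarrow> F t \<le> M t"
  shows "(SUP t\<in>T. F t / (M t / c)) \<le> c"
proof (rule cSUP_least[OF assms(1)])
  fix t assume "t \<in> T"
  thus "F t / (M t / c) \<le> c"
    using assms(2-4) by (simp add: divide_le_eq)
qed

lemma SUP_divide_rescaled_ge:
  fixes F M :: "'a \<Rightarrow> real"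
  assumes "bdd_above ((\<lambda>t. F t / (M t / c)) ` T)" "t\<^sub>0 \<in> T" "0 < c" "0 < M t\<^sub>0" "M t\<^sub>0 \<le> F t\<^sub>0"
  shows "c \<le> (SUP t\<in>T. F t / (M t / c))"
proof -
  have "c \<le> F t\<^sub>0 / (M t\<^sub>0 / c)"
    using assms(3-5) by (simp add: le_divide_eq)
  also have "\<dots> \<le> (SUP t\<in>T. F t / (M t / c))"
    using assms(2,1) by (rule cSUP_upper)
  finally show ?thesis .
qed

lemma rth_smallest_rescaled_by_Max_deviation:
  fixes F :: "'i \<Rightarrow> 'a::topological_space \<Rightarrow> real" and T :: "'a set"
  defines "S \<equiv> \<lambda>h. SUP t\<in>T. F h t"
  assumes "compact T" "T \<noteq> {}" "finite I" "1 \<le> r" "r \<le> card I"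
    and cont: "\<And>h. h \<in> I \<Longrightarrow> continuous_on T (F h)"
    and k: "k = rth_smallest r (image_mset S (mset_set I))"
    and M: "\<And>t. M t = Max ((\<lambda>j. F j t) ` {h \<in> I. S h \<le> k})"
    and M_pos: "\<And>t. t \<in> T \<Longrightarrow> 0 < M t" and "0 < c"
  shows "rth_smallest r (image_mset (\<lambda>h. SUP t\<in>T. F h t / (M t / c)) (mset_set I)) = c"
proof -
  define H where "H = {h \<in> I. S h \<le> k}"
  have H: "finite H" "H \<noteq> {}"
    unfolding H_def k using assms(4-6) sublevel_rth_smallest_nonempty by auto
  have le_M: "F j t \<le> M t" if "j \<in> H" for j t
    unfolding M H_def[symmetric] using H that by simp
  have M_le_k: "M t \<le> k" if "t \<in> T" for t
  proof -
    have "M t \<in> (\<lambda>j. F j t) ` H"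
      unfolding M H_def[symmetric] using H by (intro Max_in) auto
    then obtain j where j: "j \<in> H" "M t = F j t"
      by auto
    have "F j t \<le> S j"
      unfolding S_def using j(1) that bdd_above_continuous_image[OF assms(2) cont]
      by (intro cSUP_upper) (auto simp: H_def)
    thus ?thesis
      using j by (simp add: H_def)
  qed
  have cont_M: "continuous_on T M"
    unfolding M[abs_def] H_def[symmetric] using H cont
    by (intro continuous_on_Max_image) (auto simp: H_def)
  show ?thesis
  proof (rule rth_smallest_image_mset_transfer[OF assms(4-6) k])
    fix h assume "h \<in> I" "S h \<le> k"
    thus "(SUP t\<in>T. F h t / (M t / c)) \<le> c"
      using assms(3) \<open>0 < c\<close> M_pos le_M by (intro SUP_divide_rescaled_le) (auto simp: H_def)
  next
    fix h assume h: "h \<in> I" "k \<le> S h"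
    obtain t\<^sub>0 where t\<^sub>0: "t\<^sub>0 \<in> T" "\<And>t. t \<in> T \<Longrightarrow> F h t \<le> F h t\<^sub>0"
      using continuous_attains_sup[OF assms(2,3) cont[OF h(1)]] by auto
    have "S h \<le> F h t\<^sub>0"
      unfolding S_def using assms(3) t\<^sub>0 by (intro cSUP_least) auto
    hence "M t\<^sub>0 \<le> F h t\<^sub>0"
      using M_le_k[OF t\<^sub>0(1)] h(2) by linarith
    moreover have "continuous_on T (\<lambda>t. F h t / (M t / c))"
      using cont[OF h(1)] cont_M M_pos \<open>0 < c\<close> by (intro continuous_intros) force+
    ultimately show "c \<le> (SUP t\<in>T. F h t / (M t / c))"
      using bdd_above_continuous_image[OF assms(2)] t\<^sub>0(1) M_pos \<open>0 < c\<close>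
      by (intro SUP_divide_rescaled_ge) auto
  qed
qed

theorem mainTheorem5:
  fixes a b \<alpha> :: real and n :: nat and I1 I2 :: "nat set"
    and y :: "nat \<Rightarrow> real \<Rightarrow> real" and g :: "real \<Rightarrow> real"
  assumes "a < b"
    and "\<And>i. i \<in> {1..n} \<Longrightarrow> continuous_on {a..b} (y i)"
    and "continuous_on {a..b} g"
    and "I1 \<union> I2 = {1..n}" and "I1 \<inter> I2 = {}"
    and "card I1 \<ge> 1" and "card I2 \<ge> 1"
    and "1 / (real (card I2) + 1) \<le> \<alpha>" and "\<alpha> < 1"
    and "\<And>t. t \<in> {a..b} \<Longrightarrow> Mfun {a..b} y g I2 \<alpha> t > 0"
  shows "ku {a..b} y g I2 \<alpha>
           (\<lambda>t. Mfun {a..b} y g I2 \<alpha> t / integral {a..b} (Mfun {a..b} y g I2 \<alpha>))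
         = integral {a..b} (Mfun {a..b} y g I2 \<alpha>)"
proof -
  let ?M = "Mfun {a..b} y g I2 \<alpha>"
  have "finite I2"
    using assms(7) card.infinite by fastforce
  have cont_dev: "continuous_on {a..b} (\<lambda>t. \<bar>y h t - g t\<bar>)" if "h \<in> I2" for h
  proof -
    have "h \<in> {1..n}"
      using assms(4) that by blast
    thus ?thesis
      using assms(2,3) by (intro continuous_intros) auto
  qed
  have "continuous_on {a..b} ?M"
    unfolding Mfun_def H2set_def
    using \<open>finite I2\<close> cont_dev sublevel_rth_smallest_nonempty[OF \<open>finite I2\<close> conf_rank_bounds[OF assms(8,9)]]
    by (intro continuous_on_Max_image) (auto simp: kq_def)
  hence "0 < integral {a..b} ?M"
    using assms(1,10) by (intro integral_pos_continuous)
  thus ?thesis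
    unfolding ku_def
    using rth_smallest_rescaled_by_Max_deviation[OF compact_Icc _ \<open>finite I2\<close>
        conf_rank_bounds[OF assms(8,9)] cont_dev refl _ assms(10)]
      assms(1)
    by (simp add: Mfun_def H2set_def kq_def)
qed

end
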